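(* Let $n\ge2$ and let $w_{12},w_{13},w_{23}$ be real numbers. For any sequence $S\in\mathcal{R}(n;1)$ (a minimal-length sequence transferring all $n$ disks from Peg 1 back to Peg 1 in which the largest disk is moved), played alternately by Anh (odd-numbered moves) and Bao (even-numbered moves), the total score (Anh's points minus Bao's points) is $\Delta_{11}(n)=3w_{23}-w_{12}-w_{13}$ if $n$ is odd, and $\Delta_{11}(n)=w_{12}+w_{13}-w_{23}$ if $n$ is even.
   Context: Tower of Hanoi on three pegs (labeled 1, 2, 3) with disks $1<2<\dots<n$ ordered by size; a legal move transfers the top disk of one peg to a different peg that is empty or has a larger top disk. A move between Peg $i$ and Peg $j$ (either direction) is a move along edge $\{i,j\}$ and earns the mover the real weight $w_{ij}=w_{ji}$. The minimal algorithm $\mathcal{M}(n;i\to j)$ ($i\ne j$, $k$ the third peg) is defined recursively: $\mathcal{M}(1;i\to j)$ is the single move of disk 1 from $i$ to $j$; for $n\ge2$, $\mathcal{M}(n;i\to j)$ is $\mathcal{M}(n-1;i\to k)$, then the move of disk $n$ from $i$ to $j$, then $\mathcal{M}(n-1;k\to j)$. For a peg $i$ and $n\ge2$, the set $\mathcal{R}(n;i)$ of minimal return sequences (each of length $2^{n+1}-1$) is defined recursively: for $\{i,a,b\}=\{1,2,3\}$ (either labeling of the two other pegs as $a,b$), $\mathcal{R}(n;i)$ contains the sequence $\mathcal{M}(n-1;i\to b)$, disk $n$ from $i$ to $a$, $\mathcal{M}(n-1;b\to i)$, disk $n$ from $a$ to $b$, $\mathcal{M}(n-1;i\to a)$, disk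 $n$ from $b$ to $i$, $\mathcal{M}(n-1;a\to i)$; and, if $n\ge3$, also every sequence $\mathcal{M}(n-1;i\to b)$, disk $n$ from $i$ to $a$, $T$, disk $n$ from $a$ to $i$, $\mathcal{M}(n-1;b\to i)$, where $T\in\mathcal{R}(n-1;b)$ (acting on disks $1,\dots,n-1$). When a move sequence is played in the two-player game, Anh makes moves $1,3,5,\dots$ and Bao makes moves $2,4,\dots$, each earning the weight of the moves they make. *)

theory Defs
  imports Main "HOL-Library.Multiset" Complex_Main
begin

text \<open>A move is a triple (disk, source peg, target peg); pegs are 1, 2, 3.\<close>
type_synonym move = "nat \<times> nat \<times> nat"

definition third_peg :: "nat \<Rightarrow> nat \<Rightarrow> nat" where
  "third_peg i j = 6 - i - j"

fun hanoi_M :: "nat \<Rightarrow> nat \<Rightarrow> nat \<Rightarrow> move list" where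
  "hanoi_M 0 i j = []"
| "hanoi_M (Suc n) i j =
     hanoi_M n i (third_peg i j) @ [(Suc n, i, j)] @ hanoi_M n (third_peg i j) j"

fun hanoi_Rset :: "nat \<Rightarrow> nat \<Rightarrow> move list set" where
  "hanoi_Rset 0 i = {}"
| "hanoi_Rset (Suc m) i =
    (if Suc m < 2 then {} else
     {hanoi_M m i b @ [(Suc m, i, a)] @ hanoi_M m b i @ [(Suc m, a, b)]
        @ hanoi_M m i a @ [(Suc m, b, i)] @ hanoi_M m a i
      | a b. {i, a, b} = {1, 2, 3} \<and> i \<noteq> a \<and> i \<noteq> b \<and> a \<noteq> b}
     \<union>
     {hanoi_M m i b @ [(Suc m, i, a)] @ T @ [(Suc m, a, i)] @ hanoi_M m b i
        | a b T. Suc m \<ge> 3 \<and> {i, a, b} = {1, 2, 3} \<and> i \<noteq> a \<and> i \<noteq> b \<and> a \<noteq> b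
               \<and> T \<in> hanoi_Rset m b})"

definition edge_weight :: "real \<Rightarrow> real \<Rightarrow> real \<Rightarrow> nat \<Rightarrow> nat \<Rightarrow> real" where
  "edge_weight w12 w13 w23 p q =
     (if {p, q} = {1, 2} then w12 else if {p, q} = {1, 3} then w13
      else if {p, q} = {2, 3} then w23 else 0)"

text \<open>Anh makes moves 1,3,5,... (0-based indices 0,2,4,...), Bao the others;
  score = Anh's points minus Bao's points.\<close>
definition game_score :: "real \<Rightarrow> real \<Rightarrow> real \<Rightarrow> move list \<Rightarrow> real" where
  "game_score w12 w13 w23 S =
     (\<Sum>k<length S. (if even k then 1 else -1) *
        edge_weight w12 w13 w23 (fst (snd (S ! k))) (snd (snd (S ! k))))"

end

theory Submission
  imports Defs
begin

text \<open>The score of a concatenation is the score of the first part plus or minus that of the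
  second, according to the parity of the length of the first part. Every minimal transfer
  has odd length, hence so does every minimal return sequence, and the score of
  \<open>\<M>(n; i \<rightarrow> j)\<close> depends only on the parity of \<open>n\<close>: it is \<open>w\<^sub>i\<^sub>j\<close> for odd \<open>n\<close> and
  \<open>W - 2 w\<^sub>i\<^sub>j\<close> for even \<open>n\<close>, where \<open>W = w\<^sub>1\<^sub>2 + w\<^sub>1\<^sub>3 + w\<^sub>2\<^sub>3\<close>. An induction over the two
  shapes of return sequences then shows that a sequence in \<open>\<R>(n; i)\<close> scores \<open>4 w\<^sub>a\<^sub>b - W\<close>
  for odd \<open>n\<close> and \<open>W - 2 w\<^sub>a\<^sub>b\<close> for even \<open>n\<close>, where \<open>{a, b}\<close> is the edge opposite to \<open>i\<close>.\<close>

lemma game_score_Nil [simp]: "game_score w12 w13 w23 [] = 0"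
  by (simp add: game_score_def)

lemma game_score_Cons [simp]:
  "game_score w12 w13 w23 ((d, p, q) # S) = edge_weight w12 w13 w23 p q - game_score w12 w13 w23 S"
  unfolding game_score_def
  by (auto simp add: sum.lessThan_Suc_shift sum_negf[symmetric] simp del: sum.lessThan_Suc
      intro!: sum.cong)

lemma game_score_append:
  "game_score w12 w13 w23 (S @ T) =
   game_score w12 w13 w23 S + (if even (length S) then 1 else -1) * game_score w12 w13 w23 T"
  by (induction S) auto

lemma length_hanoi_M: "length (hanoi_M n i j) = 2 ^ n - 1"
  by (induction n arbitrary: i j) auto

lemma odd_length_hanoi_M: "n > 0 \<Longrightarrow> odd (length (hanoi_M n i j))"
  by (simp add: length_hanoi_M)

lemma edge_weight_eqs [simp]:
  "edge_weight w12 w13 w23 1 2 = w12" "edge_weight w12 w13 w23 2 1 = w12"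
  "edge_weight w12 w13 w23 1 3 = w13" "edge_weight w12 w13 w23 3 1 = w13"
  "edge_weight w12 w13 w23 2 3 = w23" "edge_weight w12 w13 w23 3 2 = w23"
  by (simp_all add: edge_weight_def doubleton_eq_iff)

lemmas edge_weight_eqs_Suc_0 [simp] = edge_weight_eqs(1-4)[unfolded One_nat_def]

lemma distinct_pegs_cases:
  assumes "{i, a, b} = {1, 2, 3::nat}" "i \<noteq> a" "i \<noteq> b" "a \<noteq> b"
  shows "(i, a, b) \<in> {(1,2,3), (1,3,2), (2,1,3), (2,3,1), (3,1,2), (3,2,1)}"
proof -
  have "i \<in> {1,2,3}" "a \<in> {1,2,3}" "b \<in> {1,2,3}"
    using assms(1) by blast+
  then show ?thesis
    using assms(2-4) by auto
qed

lemma game_score_hanoi_M: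
  assumes "i \<in> {1,2,3}" "j \<in> {1,2,3}" "i \<noteq> j"
  shows "game_score w12 w13 w23 (hanoi_M n i j) =
    (if n = 0 then 0 else if odd n then edge_weight w12 w13 w23 i j
     else w12 + w13 + w23 - 2 * edge_weight w12 w13 w23 i j)"
  using assms
proof (induction n arbitrary: i j)
  case 0
  then show ?case by simp
next
  case (Suc n)
  define k where "k = third_peg i j"
  have k: "k \<in> {1,2,3}" "i \<noteq> k" "k \<noteq> j"
    using Suc.prems by (auto simp: k_def third_peg_def)
  show ?case
  proof (cases "n = 0")
    case True
    then show ?thesis by simp
  next
    case False
    then have "game_score w12 w13 w23 (hanoi_M (Suc n) i j) =
       game_score w12 w13 w23 (hanoi_M n i k) - edge_weight w12 w13 w23 i j
       + game_score w12 w13 w23 (hanoi_M n k j)"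
      by (simp add: k_def game_score_append odd_length_hanoi_M)
    then show ?thesis
      using Suc.IH[of i k] Suc.IH[of k j] k Suc.prems False
      by (auto simp: k_def third_peg_def)
  qed
qed

lemma hanoi_Rset_cases:
  assumes "S \<in> hanoi_Rset (Suc m) i"
  obtains (three_moves) a b where "{i, a, b} = {1, 2, 3}" "i \<noteq> a" "i \<noteq> b" "a \<noteq> b"
      "S = hanoi_M m i b @ [(Suc m, i, a)] @ hanoi_M m b i @ [(Suc m, a, b)]
        @ hanoi_M m i a @ [(Suc m, b, i)] @ hanoi_M m a i"
  | (nested) a b T where "m \<ge> 2" "{i, a, b} = {1, 2, 3}" "i \<noteq> a" "i \<noteq> b" "a \<noteq> b"
      "T \<in> hanoi_Rset m b"
      "S = hanoi_M m i b @ [(Suc m, i, a)] @ T @ [(Suc m, a, i)] @ hanoi_M m b i"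
  using assms by (auto split: if_splits)

lemma length_hanoi_Rset: "S \<in> hanoi_Rset n i \<Longrightarrow> length S = 2 ^ (n + 1) - 1"
proof (induction n arbitrary: i S)
  case 0
  then show ?case by simp
next
  case (Suc m)
  have "m > 0"
    using Suc.prems by (cases m) auto
  then have "(2::nat) ^ m \<ge> 2"
    using one_less_power[of "2::nat" m] by simp
  from Suc.prems show ?case
    by (cases rule: hanoi_Rset_cases) (use \<open>2 ^ m \<ge> 2\<close> Suc.IH in \<open>auto simp: length_hanoi_M\<close>)
qed

lemma game_score_hanoi_Rset:
  assumes "{i, a, b} = {1, 2, 3}" "i \<noteq> a" "i \<noteq> b" "a \<noteq> b" "S \<in> hanoi_Rset n i"
  shows "game_score w12 w13 w23 S =
    (if odd n then 4 * edge_weight w12 w13 w23 a b - (w12 + w13 + w23)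
     else w12 + w13 + w23 - 2 * edge_weight w12 w13 w23 a b)"
  using assms
proof (induction n arbitrary: i a b S)
  case 0
  then show ?case by simp
next
  case (Suc m)
  have "m > 0"
    using Suc.prems(5) by (cases m) auto
  have iab: "(i, a, b) \<in> {(1,2,3), (1,3,2), (2,1,3), (2,3,1), (3,1,2), (3,2,1)}"
    using distinct_pegs_cases[OF Suc.prems(1-4)] .
  from Suc.prems(5) show ?case
  proof (cases rule: hanoi_Rset_cases)
    case (three_moves a' b')
    have "(i, a', b') \<in> {(1,2,3), (1,3,2), (2,1,3), (2,3,1), (3,1,2), (3,2,1)}"
      using distinct_pegs_cases[OF three_moves(1-4)] .
    moreover have "game_score w12 w13 w23 S =
       game_score w12 w13 w23 (hanoi_M m i b') - edge_weight w12 w13 w23 i a'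
       + game_score w12 w13 w23 (hanoi_M m b' i) - edge_weight w12 w13 w23 a' b'
       + game_score w12 w13 w23 (hanoi_M m i a') - edge_weight w12 w13 w23 b' i
       + game_score w12 w13 w23 (hanoi_M m a' i)"
      using three_moves(5) \<open>m > 0\<close> by (simp add: game_score_append odd_length_hanoi_M)
    ultimately show ?thesis
      using iab \<open>m > 0\<close> by (auto simp: game_score_hanoi_M)
  next
    case (nested a' b' T)
    have i: "(i, a', b') \<in> {(1,2,3), (1,3,2), (2,1,3), (2,3,1), (3,1,2), (3,2,1)}"
      using distinct_pegs_cases[OF nested(2-5)] .
    \<comment> \<open>\<open>T\<close> returns to \<open>b'\<close>, so its opposite edge is \<open>{i, a'}\<close>.\<close>
    have T: "game_score w12 w13 w23 T =
      (if odd m then 4 * edge_weight w12 w13 w23 i a' - (w12 + w13 + w23)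
       else w12 + w13 + w23 - 2 * edge_weight w12 w13 w23 i a')"
      using Suc.IH[of b' i a' T] nested(2-6) by (simp add: insert_commute)
    have "odd (length T)"
      using length_hanoi_Rset[OF nested(6)] \<open>m > 0\<close> by simp
    then have "game_score w12 w13 w23 S =
       game_score w12 w13 w23 (hanoi_M m i b') - edge_weight w12 w13 w23 i a'
       + game_score w12 w13 w23 T - edge_weight w12 w13 w23 a' i
       + game_score w12 w13 w23 (hanoi_M m b' i)"
      using nested(7) \<open>m > 0\<close> by (simp add: game_score_append odd_length_hanoi_M)
    then show ?thesis
      using iab i T \<open>m > 0\<close> by (auto simp: game_score_hanoi_M)
  qed
qed

theorem lemma2:
  fixes n :: nat and w12 w13 w23 :: real and S :: "move list"
  assumes "n \<ge> 2"
    and "S \<in> hanoi_Rset n 1"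
  shows "game_score w12 w13 w23 S =
           (if odd n then 3 * w23 - w12 - w13 else w12 + w13 - w23)"
  using game_score_hanoi_Rset[of 1 2 3, OF _ _ _ _ assms(2), of w12 w13 w23] by auto

end
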